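(* Let $n\ge4$ and let $Z^*$ be a nonzero $2$-cocycle over $[n]$. Then the facet graph $G_2(Z^* )$ is $2$-connected.
   Context: Fix a field $\mathbb F$. A $j$-simplex is a $(j+1)$-element subset of $[n]$ oriented by increasing order. For a simplex $\rho$ and $\tau=\rho\setminus\{p\}$ with $p$ the $i$-th smallest element of $\rho$, $\mathrm{sign}(\rho,\tau)=(-1)^{i-1}$. A $2$-cochain is a formal $\mathbb F$-combination of $2$-simplices; the coboundary is $\delta\tau=\sum_{p\in[n]\setminus\tau}\mathrm{sign}(\tau\cup\{p\},\tau)(\tau\cup\{p\})$, extended linearly. A $2$-cocycle is a $2$-cochain $Z$ with $\delta Z=0$. The facet graph $G_2(Z^* )$ has vertex set $\mathrm{Supp}(Z^* )$ (simplices with nonzero coefficient), two $2$-simplices adjacent iff they share an edge. A graph is $k$-connected if deleting any set of fewer than $k$ of its vertices leaves a nonempty connected graph. *)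

theory Defs
  imports Main
begin

definition simplex :: "nat \<Rightarrow> nat \<Rightarrow> nat set \<Rightarrow> bool" where
  "simplex n j s \<longleftrightarrow> s \<subseteq> {1..n} \<and> card s = j + 1"

text \<open>sign(rho, rho - {p}) = (-1)^(i-1) where p is the i-th smallest element of rho,
  i.e. i - 1 = number of elements of rho smaller than p.\<close>
definition simp_sign :: "nat set \<Rightarrow> nat \<Rightarrow> 'a::field" where
  "simp_sign rho p = (-1) ^ card {q \<in> rho. q < p}"

definition cochain2 :: "nat \<Rightarrow> (nat set \<Rightarrow> 'a::field) \<Rightarrow> bool" where
  "cochain2 n Z \<longleftrightarrow> (\<forall>s. \<not> simplex n 2 s \<longrightarrow> Z s = 0)"

text \<open>Coefficient of rho in the coboundary of the simplex tau
  (delta tau = sum over p in [n] - tau of sign(tau + p, tau) (tau + p)).\<close>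
definition cobdry_coeff :: "nat \<Rightarrow> nat set \<Rightarrow> nat set \<Rightarrow> 'a::field" where
  "cobdry_coeff n tau rho =
     (if \<exists>p \<in> {1..n} - tau. rho = insert p tau
      then simp_sign rho (THE p. p \<in> {1..n} - tau \<and> rho = insert p tau) else 0)"

definition cobdry2 :: "nat \<Rightarrow> (nat set \<Rightarrow> 'a::field) \<Rightarrow> nat set \<Rightarrow> 'a" where
  "cobdry2 n Z rho = (\<Sum>tau \<in> {t. simplex n 2 t}. Z tau * cobdry_coeff n tau rho)"

definition cocycle2 :: "nat \<Rightarrow> (nat set \<Rightarrow> 'a::field) \<Rightarrow> bool" where
  "cocycle2 n Z \<longleftrightarrow> cochain2 n Z \<and> (\<forall>rho. cobdry2 n Z rho = 0)"

definition supp :: "nat \<Rightarrow> (nat set \<Rightarrow> 'a::field) \<Rightarrow> nat set set" where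
  "supp n Z = {s. simplex n 2 s \<and> Z s \<noteq> 0}"

definition facet_adj :: "nat set \<Rightarrow> nat set \<Rightarrow> bool" where
  "facet_adj s t \<longleftrightarrow> s \<noteq> t \<and> card (s \<inter> t) = 2"

definition graph_connected :: "'v set \<Rightarrow> ('v \<Rightarrow> 'v \<Rightarrow> bool) \<Rightarrow> bool" where
  "graph_connected V E \<longleftrightarrow> V \<noteq> {} \<and>
     (\<forall>u \<in> V. \<forall>v \<in> V. (u, v) \<in> {(x, y). x \<in> V \<and> y \<in> V \<and> E x y}\<^sup>*)"

definition k_connected :: "nat \<Rightarrow> 'v set \<Rightarrow> ('v \<Rightarrow> 'v \<Rightarrow> bool) \<Rightarrow> bool" where
  "k_connected k V E \<longleftrightarrow>
     (\<forall>S \<subseteq> V. card S < k \<longrightarrow> graph_connected (V - S) E)"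

end

theory Submission
  imports Defs
begin

text \<open>
  A support triangle s of a 2-cocycle contributes \<open>\<plusminus>Z s \<noteq> 0\<close> to the coboundary at every
  tetrahedron \<open>s \<union> {p}\<close>, so each such tetrahedron contains a second support triangle: the support
  is locally closed. Two nonempty
  locally closed families always contain triangles sharing an edge. If the facet graph of a
  locally closed family, possibly after deleting one triangle x, split into parts A and B with no
  edge between them, both parts would be locally closed (after putting x back on the side it is
  adjacent to), contradicting the first fact. The remaining case is that x has neighbours u in A
  and v in B; the vertices p and q they add to x are distinct, and closing u towards q and v
  towards p gives triangles on both sides containing the edge \<open>{p, q}\<close>.
\<close>

lemma two_le_card_Int:
  assumes "finite s" "a \<in> s \<inter> t" "b \<in> s \<inter> t" "a \<noteq> b"
  shows "2 \<le> card (s \<inter> t)"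
  using assms card_le_Suc0_iff_eq[of "s \<inter> t"] by auto

lemma exists_other_if_two_le_card:
  assumes "2 \<le> card s"
  shows "\<exists>b\<in>s. b \<noteq> a"
  using card_mono[of "{a}" s] assms by auto

lemma two_le_card_Int_in_insert:
  assumes "finite s" "card s = 3" "u \<subseteq> insert p s" "v \<subseteq> insert p s" "card u = 3" "card v = 3"
  shows "2 \<le> card (u \<inter> v)"
proof -
  have "finite u" "finite v" using assms finite_subset by (metis finite_insert)+
  then have "card u + card v = card (u \<union> v) + card (u \<inter> v)" by (rule card_Un_Int)
  moreover have "card (u \<union> v) \<le> card (insert p s)" using assms by (intro card_mono) auto
  moreover have "card (insert p s) \<le> 4" using assms by (simp add: card_insert_if)
  ultimately show ?thesis using assms by simp
qed

lemma subset_insert_mem: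
  assumes "finite s" "card u = card s" "u \<subseteq> insert p s" "u \<noteq> s"
  shows "p \<in> u"
proof (rule ccontr)
  assume "p \<notin> u"
  with assms(3) have "u \<subseteq> s" by blast
  with assms show False using card_subset_eq by metis
qed

lemma subset_insert_eq_exchange:
  assumes "finite s" "card u = card s" "u \<subseteq> insert p s" "p \<notin> s" "a \<in> s" "a \<notin> u"
  shows "u = insert p (s - {a})"
proof (rule card_subset_eq)
  show "finite (insert p (s - {a}))" using assms by simp
  show "u \<subseteq> insert p (s - {a})" using assms by blast
  have "card s > 0" using assms card_gt_0_iff by blast
  then show "card u = card (insert p (s - {a}))" using assms by (simp add: card_Diff_singleton)
qed

lemma subset_insert_if_two_le_card_Int:
  assumes "finite x" "card t = 3" "card x = 3" "2 \<le> card (t \<inter> x)" "t \<noteq> x"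
  obtains q where "q \<in> t" "q \<notin> x" "t \<subseteq> insert q x"
proof -
  have "t - x \<noteq> {}"
    using assms card_subset_eq[of x t] by (metis Diff_eq_empty_iff)
  then obtain q where q: "q \<in> t - x" by blast
  have "card (t - x) \<le> 1"
    using assms card_Diff_subset_Int[of t x] by simp
  moreover have "finite t" using assms(2) card.infinite by fastforce
  ultimately have "t - x = {q}"
    using q card_le_Suc0_iff_eq[of "t - x"] by auto
  then show thesis using that q by blast
qed

definition locally_closed :: "'a set \<Rightarrow> 'a set set \<Rightarrow> bool" where
  "locally_closed V X \<longleftrightarrow>
     (\<forall>s\<in>X. s \<subseteq> V \<and> card s = 3 \<and> (\<forall>p\<in>V - s. \<exists>u\<in>X. u \<noteq> s \<and> u \<subseteq> insert p s))"

lemma locally_closedD: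
  assumes "locally_closed V X" "s \<in> X"
  shows "s \<subseteq> V" "card s = 3" "finite s"
proof -
  show "s \<subseteq> V" "card s = 3" using assms unfolding locally_closed_def by auto
  then show "finite s" by (intro card_ge_0_finite) simp
qed

lemma locally_closed_new_vertex:
  assumes X: "locally_closed V X" and s: "s \<in> X" and p: "p \<in> V - s"
  obtains u where "u \<in> X" "u \<noteq> s" "u \<subseteq> insert p s" "p \<in> u"
proof -
  have "\<forall>p\<in>V - s. \<exists>u\<in>X. u \<noteq> s \<and> u \<subseteq> insert p s"
    using X s unfolding locally_closed_def by blast
  with p obtain u where u: "u \<in> X" "u \<noteq> s" "u \<subseteq> insert p s" by blast
  have "p \<in> u"
  proof (rule subset_insert_mem)
    show "finite s" using locally_closedD[OF X s] by simp
    show "card u = card s" using locally_closedD[OF X s] locally_closedD[OF X u(1)] by simp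
  qed (use u in auto)
  with u show thesis by (rule that)
qed

lemma locally_closed_covers:
  assumes "locally_closed V X" "s \<in> X" "p \<in> V"
  obtains u where "u \<in> X" "p \<in> u"
proof (cases "p \<in> s")
  case False
  with assms(3) have "p \<in> V - s" by blast
  then show thesis
    by (rule locally_closed_new_vertex[OF assms(1,2)]) (rule that)
qed (use assms that in blast)

lemma locally_closed_subfamily:
  assumes X: "locally_closed V X" and "A \<subseteq> X"
    and closed: "\<And>s u. s \<in> A \<Longrightarrow> u \<in> X \<Longrightarrow> 2 \<le> card (s \<inter> u) \<Longrightarrow> u \<in> A"
  shows "locally_closed V A"
  unfolding locally_closed_def
proof (intro ballI conjI)
  fix s assume "s \<in> A"
  with \<open>A \<subseteq> X\<close> have s: "s \<in> X" by blast
  show "s \<subseteq> V" "card s = 3" using locally_closedD[OF X s] by simp_all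
  show "\<exists>u\<in>A. u \<noteq> s \<and> u \<subseteq> insert p s" if p: "p \<in> V - s" for p
  proof -
    obtain u where u: "u \<in> X" "u \<noteq> s" "u \<subseteq> insert p s"
      using locally_closed_new_vertex[OF X s p] by blast
    have "2 \<le> card (s \<inter> u)"
      using two_le_card_Int_in_insert[of s s p u] locally_closedD[OF X] s u by auto
    then show ?thesis using closed \<open>s \<in> A\<close> u by blast
  qed
qed

lemma locally_closed_share_edge:
  assumes W1: "locally_closed V W1" and W2: "locally_closed V W2"
    and "W1 \<noteq> {}" "W2 \<noteq> {}"
  shows "\<exists>s\<in>W1. \<exists>t\<in>W2. 2 \<le> card (s \<inter> t)"
proof (rule ccontr)
  assume "\<not> ?thesis"
  then have no_edge: False
    if "s \<in> W1" "t \<in> W2" "a \<in> s \<inter> t" "b \<in> s \<inter> t" "a \<noteq> b" for s t a b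
    using that two_le_card_Int[of s a t b] locally_closedD(3)[OF W1] by blast
  \<comment> \<open>From \<open>s \<inter> t = {a}\<close>, exchanging a in s for a vertex d of t and then d in t for a
    vertex b of s leaves the edge \<open>{a, b}\<close> in s and in the new triangle of \<open>W2\<close>.\<close>
  obtain s0 t where s0: "s0 \<in> W1" and t: "t \<in> W2" using assms by blast
  note t3 = locally_closedD[OF W2 t]
  obtain a where "a \<in> t" using t3(2) by fastforce
  with t3 have "a \<in> V" by blast
  obtain s where s: "s \<in> W1" "a \<in> s" by (rule locally_closed_covers[OF W1 s0 \<open>a \<in> V\<close>])
  note s3 = locally_closedD[OF W1 s(1)]
  obtain d where d: "d \<in> t" "d \<noteq> a" using t3(2) exists_other_if_two_le_card[of t a] by auto
  have "d \<notin> s" using no_edge[OF s(1) t, of a d] s d \<open>a \<in> t\<close> by blast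
  with d t3 have "d \<in> V - s" by blast
  obtain s' where s': "s' \<in> W1" "s' \<noteq> s" "s' \<subseteq> insert d s" "d \<in> s'"
    by (rule locally_closed_new_vertex[OF W1 s(1) \<open>d \<in> V - s\<close>])
  have "a \<notin> s'" using no_edge[OF s'(1) t, of d a] s' d \<open>a \<in> t\<close> by blast
  then have s'_eq: "s' = insert d (s - {a})"
    using subset_insert_eq_exchange[of s s' d a] s3 s s' \<open>d \<notin> s\<close> locally_closedD[OF W1 s'(1)]
    by simp
  obtain b where b: "b \<in> s" "b \<noteq> a" using s3(2) exists_other_if_two_le_card[of s a] by auto
  have "b \<notin> t" using no_edge[OF s(1) t, of a b] s b \<open>a \<in> t\<close> by blast
  with b s3 have "b \<in> V - t" by blast
  obtain t' where t': "t' \<in> W2" "t' \<noteq> t" "t' \<subseteq> insert b t" "b \<in> t'"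
    by (rule locally_closed_new_vertex[OF W2 t \<open>b \<in> V - t\<close>])
  have "d \<notin> t'" using no_edge[OF s'(1) t'(1), of b d] s'_eq b t' \<open>d \<notin> s\<close> by blast
  then have "t' = insert b (t - {d})"
    using subset_insert_eq_exchange[of t t' b d] t3 t' d \<open>b \<notin> t\<close> locally_closedD[OF W2 t'(1)]
    by simp
  then show False using no_edge[OF s(1) t'(1), of a b] s b d \<open>a \<in> t\<close> by blast
qed

lemma locally_closed_no_separation:
  assumes X: "locally_closed V X" and parts: "X = A \<union> B" and "A \<noteq> {}" "B \<noteq> {}"
  shows "\<exists>a\<in>A. \<exists>b\<in>B. 2 \<le> card (a \<inter> b)"
proof (rule ccontr)
  assume no_edge: "\<not> ?thesis"
  have "locally_closed V A"
    by (rule locally_closed_subfamily[OF X]) (use parts no_edge in auto)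
  moreover have "locally_closed V B"
  proof (rule locally_closed_subfamily[OF X])
    fix s u assume "s \<in> B" "u \<in> X" "2 \<le> card (s \<inter> u)"
    then have "2 \<le> card (u \<inter> s)" by (simp add: Int_commute)
    then show "u \<in> B" using parts no_edge \<open>s \<in> B\<close> \<open>u \<in> X\<close> by blast
  qed (use parts in blast)
  ultimately show False
    using locally_closed_share_edge[OF _ _ \<open>A \<noteq> {}\<close> \<open>B \<noteq> {}\<close>] no_edge by blast
qed

lemma locally_closed_bridge:
  assumes X: "locally_closed V X" and x: "x \<in> X" and parts: "X - {x} = A \<union> B"
    and no_edge: "\<And>a b. a \<in> A \<Longrightarrow> b \<in> B \<Longrightarrow> card (a \<inter> b) < 2"
    and u: "u \<in> A" "u \<subseteq> insert p x" "p \<notin> x"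
    and v: "v \<in> B" "v \<subseteq> insert q x" "q \<in> v" "q \<notin> x"
    and "p \<noteq> q"
  obtains w where "w \<in> A" "p \<in> w" "q \<in> w"
proof -
  have uX: "u \<in> X" and vX: "v \<in> X" using parts u v by blast+
  note u3 = locally_closedD[OF X uX] and v3 = locally_closedD[OF X vX]
  have "q \<in> V - u" using u v v3 \<open>p \<noteq> q\<close> by blast
  obtain w where w: "w \<in> X" "w \<noteq> u" "w \<subseteq> insert q u" "q \<in> w"
    by (rule locally_closed_new_vertex[OF X uX \<open>q \<in> V - u\<close>])
  note w3 = locally_closedD[OF X w(1)]
  have "2 \<le> card (u \<inter> w)"
    by (rule two_le_card_Int_in_insert[OF u3(3,2) subset_insertI w(3) u3(2) w3(2)])
  moreover have "w \<noteq> x" using w v by blast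
  ultimately have "w \<in> A" using parts w(1) no_edge[OF u(1)] by fastforce
  moreover have "p \<in> w"
  proof (rule ccontr)
    assume "p \<notin> w"
    then have "w \<subseteq> insert q x" using w u by blast
    then have "2 \<le> card (w \<inter> v)"
      using two_le_card_Int_in_insert[of x w q v] locally_closedD[OF X x] v w3 v3 by simp
    then show False using no_edge[OF \<open>w \<in> A\<close> v(1)] by simp
  qed
  ultimately show thesis using w(4) that by blast
qed

lemma locally_closed_common_neighbour:
  assumes X: "locally_closed V X" and x: "x \<in> X" and parts: "X - {x} = A \<union> B"
    and no_edge: "\<And>a b. a \<in> A \<Longrightarrow> b \<in> B \<Longrightarrow> card (a \<inter> b) < 2"
    and u: "u \<in> A" "2 \<le> card (u \<inter> x)" and v: "v \<in> B" "2 \<le> card (v \<inter> x)"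
  shows False
proof -
  have no_edge': "card (b \<inter> a) < 2" if "b \<in> B" "a \<in> A" for a b
    using no_edge[OF that(2,1)] by (simp add: Int_commute)
  have parts': "X - {x} = B \<union> A" using parts by blast
  note x3 = locally_closedD[OF X x]
  have "u \<in> X" "u \<noteq> x" "v \<in> X" "v \<noteq> x" using parts u v by blast+
  obtain p where p: "p \<in> u" "p \<notin> x" "u \<subseteq> insert p x"
    by (rule subset_insert_if_two_le_card_Int[OF x3(3) locally_closedD(2)[OF X \<open>u \<in> X\<close>]
          x3(2) u(2) \<open>u \<noteq> x\<close>])
  obtain q where q: "q \<in> v" "q \<notin> x" "v \<subseteq> insert q x"
    by (rule subset_insert_if_two_le_card_Int[OF x3(3) locally_closedD(2)[OF X \<open>v \<in> X\<close>]
          x3(2) v(2) \<open>v \<noteq> x\<close>])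
  have "p \<noteq> q"
  proof
    assume "p = q"
    then have "2 \<le> card (u \<inter> v)"
      using two_le_card_Int_in_insert[OF x3(3,2) p(3)] q(3) locally_closedD(2)[OF X]
        \<open>u \<in> X\<close> \<open>v \<in> X\<close> by simp
    then show False using no_edge[OF u(1) v(1)] by simp
  qed
  obtain w where w: "w \<in> A" "p \<in> w" "q \<in> w"
    by (rule locally_closed_bridge[OF X x parts no_edge u(1) p(3,2) v(1) q(3,1,2) \<open>p \<noteq> q\<close>])
  obtain w' where w': "w' \<in> B" "q \<in> w'" "p \<in> w'"
    by (rule locally_closed_bridge[OF X x parts' no_edge' v(1) q(3,2) u(1) p(3,1,2)
          not_sym[OF \<open>p \<noteq> q\<close>]])
  have "2 \<le> card (w \<inter> w')"
    using two_le_card_Int[of w p w' q] w w' \<open>p \<noteq> q\<close> locally_closedD(3)[OF X] parts by blast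
  then show False using no_edge[OF w(1) w'(1)] by simp
qed

lemma locally_closed_cut_vertex_apart:
  assumes X: "locally_closed V X" and x: "x \<in> X" and parts: "X - {x} = A \<union> B"
    and "A \<noteq> {}" "B \<noteq> {}"
    and no_edge: "\<And>a b. a \<in> A \<Longrightarrow> b \<in> B \<Longrightarrow> card (a \<inter> b) < 2"
    and apart: "\<And>b. b \<in> B \<Longrightarrow> card (b \<inter> x) < 2"
  shows False
proof -
  have "X = insert x A \<union> B" using parts x by blast
  with locally_closed_no_separation[OF X] \<open>A \<noteq> {}\<close> \<open>B \<noteq> {}\<close>
  obtain a b where ab: "a \<in> insert x A" "b \<in> B" "2 \<le> card (a \<inter> b)" by blast
  have "card (a \<inter> b) < 2"
  proof (cases "a = x")
    case True
    with apart[OF ab(2)] show ?thesis by (simp add: Int_commute)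
  qed (use ab no_edge in blast)
  with ab(3) show False by simp
qed

lemma locally_closed_no_cut_vertex:
  assumes X: "locally_closed V X" and x: "x \<in> X" and parts: "X - {x} = A \<union> B"
    and "A \<noteq> {}" "B \<noteq> {}"
  shows "\<exists>a\<in>A. \<exists>b\<in>B. 2 \<le> card (a \<inter> b)"
proof (rule ccontr)
  assume "\<not> ?thesis"
  then have no_edge: "card (a \<inter> b) < 2" if "a \<in> A" "b \<in> B" for a b
    using that by force
  have no_edge': "card (b \<inter> a) < 2" if "b \<in> B" "a \<in> A" for a b
    using no_edge[OF that(2,1)] by (simp add: Int_commute)
  have parts': "X - {x} = B \<union> A" using parts by blast
  consider (B_apart) "\<forall>b\<in>B. card (b \<inter> x) < 2" | (A_apart) "\<forall>a\<in>A. card (a \<inter> x) < 2"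
    | (both) u v where "u \<in> A" "2 \<le> card (u \<inter> x)" "v \<in> B" "2 \<le> card (v \<inter> x)"
    using not_less by blast
  then show False
  proof cases
    case B_apart
    then show False
      using locally_closed_cut_vertex_apart[OF X x parts \<open>A \<noteq> {}\<close> \<open>B \<noteq> {}\<close> no_edge] by blast
  next
    case A_apart
    then show False
      using locally_closed_cut_vertex_apart[OF X x parts' \<open>B \<noteq> {}\<close> \<open>A \<noteq> {}\<close> no_edge'] by blast
  next
    case both
    then show False using locally_closed_common_neighbour[OF X x parts no_edge] by blast
  qed
qed

lemma facet_adj_iff:
  assumes "card s = 3" "card t = 3"
  shows "facet_adj s t \<longleftrightarrow> s \<noteq> t \<and> 2 \<le> card (s \<inter> t)"
proof -
  have fin: "finite s" "finite t" using assms by (auto intro: card_ge_0_finite)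
  have "card (s \<inter> t) \<le> 3" using card_mono[OF fin(1), of "s \<inter> t"] assms by auto
  moreover have "card (s \<inter> t) \<noteq> 3" if "s \<noteq> t"
    using that card_subset_eq[OF fin(1), of "s \<inter> t"] card_subset_eq[OF fin(2), of "s \<inter> t"] assms
    by auto
  ultimately show ?thesis unfolding facet_adj_def by (cases "s = t") auto
qed

lemma graph_connectedI:
  assumes "V \<noteq> {}"
    and cut: "\<And>A B. V = A \<union> B \<Longrightarrow> A \<inter> B = {} \<Longrightarrow> A \<noteq> {} \<Longrightarrow> B \<noteq> {} \<Longrightarrow> \<exists>a\<in>A. \<exists>b\<in>B. E a b"
  shows "graph_connected V E"
  unfolding graph_connected_def
proof (intro conjI ballI)
  show "V \<noteq> {}" by fact
  let ?R = "{(x, y). x \<in> V \<and> y \<in> V \<and> E x y}"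
  fix u v assume "u \<in> V" "v \<in> V"
  define A where "A = {w \<in> V. (u, w) \<in> ?R\<^sup>*}"
  have "V - A = {}"
  proof (rule ccontr)
    assume "V - A \<noteq> {}"
    moreover have "u \<in> A" using \<open>u \<in> V\<close> by (simp add: A_def)
    ultimately obtain a b where "a \<in> A" "b \<in> V - A" "E a b"
      using cut[of A "V - A"] by (auto simp: A_def)
    then show False by (auto simp: A_def intro: rtrancl_into_rtrancl)
  qed
  then show "(u, v) \<in> ?R\<^sup>*" using \<open>v \<in> V\<close> by (auto simp: A_def)
qed

lemma locally_closed_other_member:
  assumes X: "locally_closed V X" and s: "s \<in> X" and "3 < card V"
  obtains u where "u \<in> X" "u \<noteq> s"
proof -
  have "\<not> V \<subseteq> s" using card_mono[of s V] locally_closedD[OF X s] assms(3) by auto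
  then obtain p where "p \<in> V - s" by blast
  then show thesis by (rule locally_closed_new_vertex[OF X s]) (rule that)
qed

theorem locally_closed_facet_graph_2_connected:
  assumes X: "locally_closed V X" and "X \<noteq> {}" and "3 < card V"
  shows "k_connected 2 X facet_adj"
  unfolding k_connected_def
proof (intro allI impI)
  fix S assume "S \<subseteq> X" "card S < 2"
  have "finite V" using \<open>3 < card V\<close> by (intro card_ge_0_finite) simp
  moreover have "S \<subseteq> Pow V" using \<open>S \<subseteq> X\<close> locally_closedD(1)[OF X] by blast
  ultimately have "finite S" by (simp add: finite_subset)
  moreover have "card S = 0 \<or> card S = 1" using \<open>card S < 2\<close> by linarith
  ultimately consider (no_cut) "S = {}" | (cut) x where "x \<in> X" "S = {x}"
    using \<open>S \<subseteq> X\<close> by (auto simp: card_1_singleton_iff)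
  note S_cases = this
  show "graph_connected (X - S) facet_adj"
  proof (rule graph_connectedI)
    from S_cases show "X - S \<noteq> {}"
    proof cases
      case (cut x)
      obtain u where "u \<in> X" "u \<noteq> x"
        by (rule locally_closed_other_member[OF X cut(1) \<open>3 < card V\<close>])
      with cut show ?thesis by blast
    qed (use \<open>X \<noteq> {}\<close> in simp)
    fix A B assume parts: "X - S = A \<union> B" "A \<inter> B = {}" "A \<noteq> {}" "B \<noteq> {}"
    from S_cases have "\<exists>a\<in>A. \<exists>b\<in>B. 2 \<le> card (a \<inter> b)"
    proof cases
      case no_cut
      with parts show ?thesis by (intro locally_closed_no_separation[OF X]) simp_all
    next
      case (cut x)
      with parts show ?thesis by (intro locally_closed_no_cut_vertex[OF X cut(1)]) simp_all
    qed
    then obtain a b where ab: "a \<in> A" "b \<in> B" "2 \<le> card (a \<inter> b)" by blast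
    moreover have "a \<in> X" "b \<in> X" "a \<noteq> b" using ab parts(1,2) by blast+
    ultimately have "facet_adj a b" using facet_adj_iff locally_closedD(2)[OF X] by simp
    with ab show "\<exists>a\<in>A. \<exists>b\<in>B. facet_adj a b" by blast
  qed
qed

lemma cobdry_coeff_eq_0:
  assumes "\<not> tau \<subseteq> rho"
  shows "cobdry_coeff n tau rho = 0"
  using assms unfolding cobdry_coeff_def by auto

lemma cobdry_coeff_insert:
  assumes "p \<in> {1..n} - s"
  shows "cobdry_coeff n s (insert p s) = simp_sign (insert p s) p"
proof -
  have "(THE q. q \<in> {1..n} - s \<and> insert p s = insert q s) = p"
    using assms by (intro the_equality) auto
  with assms show ?thesis unfolding cobdry_coeff_def by auto
qed

lemma cocycle2_supp_locally_closed:
  fixes Z :: "nat set \<Rightarrow> 'a::field"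
  assumes "cocycle2 n Z"
  shows "locally_closed {1..n} (supp n Z)"
  unfolding locally_closed_def
proof (intro ballI conjI)
  fix s assume s: "s \<in> supp n Z"
  then show "s \<subseteq> {1..n}" "card s = 3" by (auto simp: supp_def simplex_def)
  show "\<exists>u\<in>supp n Z. u \<noteq> s \<and> u \<subseteq> insert p s" if p: "p \<in> {1..n} - s" for p
  proof (rule ccontr)
    assume isolated: "\<not> ?thesis"
    let ?T = "{t. simplex n 2 t}" and ?r = "insert p s"
    have "finite ?T" by (rule finite_subset[of _ "Pow {1..n}"]) (auto simp: simplex_def)
    moreover have "s \<in> ?T" using s by (simp add: supp_def)
    ultimately have "cobdry2 n Z ?r = Z s * cobdry_coeff n s ?r + (\<Sum>t\<in>?T - {s}. Z t * cobdry_coeff n t ?r)"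
      unfolding cobdry2_def by (rule sum.remove)
    also have "(\<Sum>t\<in>?T - {s}. Z t * cobdry_coeff n t ?r) = 0"
    proof (rule sum.neutral, rule ballI)
      fix t assume "t \<in> ?T - {s}"
      with isolated have "Z t = 0 \<or> \<not> t \<subseteq> ?r" by (auto simp: supp_def)
      then show "Z t * cobdry_coeff n t ?r = 0" by (elim disjE) (simp_all add: cobdry_coeff_eq_0)
    qed
    also have "cobdry_coeff n s ?r = simp_sign ?r p" using p by (rule cobdry_coeff_insert)
    finally have "cobdry2 n Z ?r = Z s * simp_sign ?r p" by simp
    moreover have "Z s * simp_sign ?r p \<noteq> 0" using s by (simp add: supp_def simp_sign_def)
    ultimately show False using assms by (simp add: cocycle2_def)
  qed
qed

theorem theorem4p8:
  fixes Z :: "nat set \<Rightarrow> 'a::field" and n :: nat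
  assumes "n \<ge> 4"
    and "cocycle2 n Z"
    and "\<exists>s. Z s \<noteq> 0"
  shows "k_connected 2 (supp n Z) facet_adj"
proof (rule locally_closed_facet_graph_2_connected)
  show "locally_closed {1..n} (supp n Z)" using assms(2) by (rule cocycle2_supp_locally_closed)
  obtain s where "Z s \<noteq> 0" using assms(3) by blast
  with assms(2) have "s \<in> supp n Z" by (auto simp: supp_def cocycle2_def cochain2_def)
  then show "supp n Z \<noteq> {}" by blast
  show "3 < card {1..n}" using assms(1) by simp
qed

end
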